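(* Let $\sigma$ be a signature containing $\triangleright$ and let $\mathcal{A}$ be a $\sigma$-algebra that is representable by partial functions. Then $\lhd$ is completely left-distributive over meets: for every nonempty $S\subseteq\mathcal{A}$ such that $\bigwedge S$ exists and every $a\in\mathcal{A}$, $\bigwedge\{a\lhd s:s\in S\}$ exists and equals $a\lhd\bigwedge S$.
   Context: Signatures $\sigma$ are sets of operation symbols drawn from: $\triangleright$ (antidomain restriction), $;$ (composition), $\wedge$ (intersection), $\mathrm{upd}$ (update), $\sqcup$ (preferential union), $\mathsf{D}$ (domain), $\mathsf{A}$ (antidomain), interpreted on partial functions as: $f \triangleright g = \{(x,y) \in g : x \notin \mathrm{dom}(f)\}$; $f;g$ = relational composition ($f$ first); $f\wedge g = f\cap g$; $\mathrm{upd}(f,g)(x)$ is $f(x)$ if $f(x)$ defined and $g(x)$ undefined, $g(x)$ if both defined, undefined otherwise; $(f\sqcup g)(x)$ is $f(x)$ if defined, else $g(x)$; $\mathsf{D}(f)$ = identity on $\mathrm{dom}(f)$; $\mathsf{A}(f)$ = identity on the complement of $\mathrm{dom}(f)$ in the base. $\mathcal{A}$ is representable if isomorphic to a $\sigma$-algebra of partial functions with these operations. Define $0 := a\triangleright a$, $a\lhd b := (a\triangleright b)\triangleright b$ (restriction of $b$ to the domain of $a$), $a \le b :\iff a\lhd b = a$; meets are taken in the poset $(\mathcal{A},\le)$. *)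

theory Defs
  imports Main
begin

datatype opsym =
    ARestr   \<comment> \<open>antidomain restriction, written \<open>\<triangleright>\<close>\<close>
  | Comp
  | Inter
  | Upd
  | Pref
  | Dom
  | Antidom

type_synonym signature = "opsym set"

text \<open>A sigma-algebra: a carrier with interpretations of the binary symbols
(ARestr, Comp, Inter, Upd, Pref) and unary symbols (Dom, Antidom).
Only the interpretations of symbols in sigma are relevant.\<close>

record 'a alg =
  car :: "'a set"
  bop :: "opsym \<Rightarrow> 'a \<Rightarrow> 'a \<Rightarrow> 'a"
  uop :: "opsym \<Rightarrow> 'a \<Rightarrow> 'a"

definition binary_syms :: "opsym set" where
  "binary_syms = {ARestr, Comp, Inter, Upd, Pref}"

definition unary_syms :: "opsym set" where
  "unary_syms = {Dom, Antidom}"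

definition is_sigma_alg :: "signature \<Rightarrow> 'a alg \<Rightarrow> bool" where
  "is_sigma_alg \<sigma> \<A> \<longleftrightarrow>
     (\<forall>op\<in>\<sigma> \<inter> binary_syms. \<forall>x\<in>car \<A>. \<forall>y\<in>car \<A>. bop \<A> op x y \<in> car \<A>) \<and>
     (\<forall>op\<in>\<sigma> \<inter> unary_syms. \<forall>x\<in>car \<A>. uop \<A> op x \<in> car \<A>)"

type_synonym 'b pfun = "'b \<Rightarrow> 'b option"

definition pf_arestr :: "'b pfun \<Rightarrow> 'b pfun \<Rightarrow> 'b pfun" where
  "pf_arestr f g = (\<lambda>x. if f x = None then g x else None)"

definition pf_comp :: "'b pfun \<Rightarrow> 'b pfun \<Rightarrow> 'b pfun" where
  "pf_comp f g = (\<lambda>x. case f x of None \<Rightarrow> None | Some y \<Rightarrow> g y)"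

definition pf_inter :: "'b pfun \<Rightarrow> 'b pfun \<Rightarrow> 'b pfun" where
  "pf_inter f g = (\<lambda>x. if f x = g x then f x else None)"

definition pf_upd :: "'b pfun \<Rightarrow> 'b pfun \<Rightarrow> 'b pfun" where
  "pf_upd f g = (\<lambda>x. if f x = None then None else if g x = None then f x else g x)"

definition pf_pref :: "'b pfun \<Rightarrow> 'b pfun \<Rightarrow> 'b pfun" where
  "pf_pref f g = (\<lambda>x. case f x of None \<Rightarrow> g x | Some y \<Rightarrow> Some y)"

definition pf_dom :: "'b pfun \<Rightarrow> 'b pfun" where
  "pf_dom f = (\<lambda>x. if f x = None then None else Some x)"

definition pf_antidom :: "'b set \<Rightarrow> 'b pfun \<Rightarrow> 'b pfun" where
  "pf_antidom X f = (\<lambda>x. if x \<in> X \<and> f x = None then Some x else None)"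

fun pf_bop :: "opsym \<Rightarrow> 'b pfun \<Rightarrow> 'b pfun \<Rightarrow> 'b pfun" where
  "pf_bop ARestr = pf_arestr"
| "pf_bop Comp = pf_comp"
| "pf_bop Inter = pf_inter"
| "pf_bop Upd = pf_upd"
| "pf_bop Pref = pf_pref"
| "pf_bop _ = (\<lambda>f g. Map.empty)"

fun pf_uop :: "'b set \<Rightarrow> opsym \<Rightarrow> 'b pfun \<Rightarrow> 'b pfun" where
  "pf_uop X Dom = pf_dom"
| "pf_uop X Antidom = pf_antidom X"
| "pf_uop X _ = (\<lambda>f. Map.empty)"

definition representation ::
  "signature \<Rightarrow> 'a alg \<Rightarrow> 'b set \<Rightarrow> ('a \<Rightarrow> 'b pfun) \<Rightarrow> bool" where
  "representation \<sigma> \<A> X h \<longleftrightarrow>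
     inj_on h (car \<A>) \<and>
     (\<forall>x\<in>car \<A>. dom (h x) \<subseteq> X \<and> ran (h x) \<subseteq> X) \<and>
     (\<forall>op\<in>\<sigma> \<inter> binary_syms. \<forall>x\<in>car \<A>. \<forall>y\<in>car \<A>.
        h (bop \<A> op x y) = pf_bop op (h x) (h y)) \<and>
     (\<forall>op\<in>\<sigma> \<inter> unary_syms. \<forall>x\<in>car \<A>.
        h (uop \<A> op x) = pf_uop X op (h x))"

definition representable_over ::
  "'b itself \<Rightarrow> signature \<Rightarrow> 'a alg \<Rightarrow> bool" where
  "representable_over _ \<sigma> \<A> \<longleftrightarrow> (\<exists>(X::'b set) h. representation \<sigma> \<A> X h)"

definition arestr :: "'a alg \<Rightarrow> 'a \<Rightarrow> 'a \<Rightarrow> 'a" where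
  "arestr \<A> a b = bop \<A> ARestr a b"

definition restr :: "'a alg \<Rightarrow> 'a \<Rightarrow> 'a \<Rightarrow> 'a" where
  "restr \<A> a b = arestr \<A> (arestr \<A> a b) b"   \<comment> \<open>\<open>a \<lhd> b\<close>\<close>

definition leq :: "'a alg \<Rightarrow> 'a \<Rightarrow> 'a \<Rightarrow> bool" where
  "leq \<A> a b \<longleftrightarrow> restr \<A> a b = a"

definition is_meet :: "'a alg \<Rightarrow> 'a set \<Rightarrow> 'a \<Rightarrow> bool" where
  "is_meet \<A> S m \<longleftrightarrow> m \<in> car \<A> \<and> (\<forall>s\<in>S. leq \<A> m s) \<and>
     (\<forall>l\<in>car \<A>. (\<forall>s\<in>S. leq \<A> l s) \<longrightarrow> leq \<A> l m)"

end

theory Submission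
  imports Defs
begin

text \<open>Under a representation \<open>h\<close>, \<open>a \<lhd> b\<close> becomes the restriction of \<open>h b\<close> to
\<open>dom (h a)\<close> and \<open>\<le>\<close> becomes map inclusion \<open>\<subseteq>\<^sub>m\<close>, so the claim reduces to a statement
about partial maps: restricting to a fixed set \<open>D\<close> is monotone, and a map below every
\<open>g |` D\<close> for \<open>g\<close> in a nonempty family lies below every \<open>g\<close> and has domain inside \<open>D\<close>.\<close>

lemma map_le_restrict_map_mono: "f \<subseteq>\<^sub>m g \<Longrightarrow> f |` D \<subseteq>\<^sub>m g |` D"
  by (auto simp: map_le_def)

lemma map_le_restrict_map_iff: "f \<subseteq>\<^sub>m g |` D \<longleftrightarrow> f \<subseteq>\<^sub>m g \<and> dom f \<subseteq> D"
  unfolding map_le_def by (force simp: dom_def restrict_map_def)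

lemma restrict_map_dom_eq_iff_map_le: "g |` dom f = f \<longleftrightarrow> f \<subseteq>\<^sub>m g"
  by (auto simp: map_le_def restrict_map_def fun_eq_iff dom_def)

lemma pf_arestr_twice: "pf_arestr (pf_arestr f g) g = g |` dom f"
  by (simp add: pf_arestr_def restrict_map_def fun_eq_iff dom_def)

lemma arestr_closed:
  assumes "ARestr \<in> \<sigma>" "is_sigma_alg \<sigma> \<A>" "x \<in> car \<A>" "y \<in> car \<A>"
  shows "arestr \<A> x y \<in> car \<A>"
  using assms unfolding is_sigma_alg_def binary_syms_def arestr_def by auto

lemma restr_closed:
  assumes "ARestr \<in> \<sigma>" "is_sigma_alg \<sigma> \<A>" "x \<in> car \<A>" "y \<in> car \<A>"
  shows "restr \<A> x y \<in> car \<A>"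
  using assms by (simp add: restr_def arestr_closed)

lemma representation_arestr:
  assumes "ARestr \<in> \<sigma>" "representation \<sigma> \<A> X h" "x \<in> car \<A>" "y \<in> car \<A>"
  shows "h (arestr \<A> x y) = pf_arestr (h x) (h y)"
  using assms unfolding representation_def binary_syms_def arestr_def by auto

lemma representation_restr:
  assumes "ARestr \<in> \<sigma>" "is_sigma_alg \<sigma> \<A>" "representation \<sigma> \<A> X h"
    and "x \<in> car \<A>" "y \<in> car \<A>"
  shows "h (restr \<A> x y) = h y |` dom (h x)"
  using assms
  by (simp add: restr_def representation_arestr arestr_closed pf_arestr_twice)

lemma representation_leq_iff:
  assumes "ARestr \<in> \<sigma>" "is_sigma_alg \<sigma> \<A>" "representation \<sigma> \<A> X h"
    and "x \<in> car \<A>" "y \<in> car \<A>"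
  shows "leq \<A> x y \<longleftrightarrow> h x \<subseteq>\<^sub>m h y"
proof -
  have "inj_on h (car \<A>)"
    using assms(3) unfolding representation_def by blast
  then have "leq \<A> x y \<longleftrightarrow> h (restr \<A> x y) = h x"
    unfolding leq_def using assms(4) restr_closed[OF assms(1,2,4,5)] by (metis inj_on_eq_iff)
  also have "\<dots> \<longleftrightarrow> h y |` dom (h x) = h x"
    by (simp add: representation_restr[OF assms])
  finally show ?thesis
    by (simp add: restrict_map_dom_eq_iff_map_le)
qed

lemma representation_is_meet_iff:
  assumes "ARestr \<in> \<sigma>" "is_sigma_alg \<sigma> \<A>" "representation \<sigma> \<A> X h"
    and "S \<subseteq> car \<A>"
  shows "is_meet \<A> S m \<longleftrightarrow> m \<in> car \<A> \<and> (\<forall>s\<in>S. h m \<subseteq>\<^sub>m h s) \<and>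
           (\<forall>l\<in>car \<A>. (\<forall>s\<in>S. h l \<subseteq>\<^sub>m h s) \<longrightarrow> h l \<subseteq>\<^sub>m h m)"
  using assms representation_leq_iff[OF assms(1-3)] unfolding is_meet_def by blast

theorem lemma5p8:
  fixes \<sigma> :: signature and \<A> :: "'a alg"
  assumes "ARestr \<in> \<sigma>"
    and "is_sigma_alg \<sigma> \<A>"
    and "representable_over TYPE('b) \<sigma> \<A>"
    and "S \<subseteq> car \<A>" and "S \<noteq> {}"
    and "is_meet \<A> S m"
    and "a \<in> car \<A>"
  shows "is_meet \<A> ((\<lambda>s. restr \<A> a s) ` S) (restr \<A> a m)"
proof -
  obtain X :: "'b set" and h where rep: "representation \<sigma> \<A> X h"
    using assms(3) unfolding representable_over_def by blast
  note meet_iff = representation_is_meet_iff[OF assms(1,2) rep]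
  note h_restr = representation_restr[OF assms(1,2) rep assms(7)]
  have m: "m \<in> car \<A>" "\<forall>s\<in>S. h m \<subseteq>\<^sub>m h s"
    and m_greatest: "\<And>l. l \<in> car \<A> \<Longrightarrow> \<forall>s\<in>S. h l \<subseteq>\<^sub>m h s \<Longrightarrow> h l \<subseteq>\<^sub>m h m"
    using assms(4,6) meet_iff by blast+
  have restr_S: "(\<lambda>s. restr \<A> a s) ` S \<subseteq> car \<A>"
    using assms(4,7) restr_closed[OF assms(1,2)] by blast
  show ?thesis
    unfolding meet_iff[OF restr_S] ball_simps
  proof (intro conjI ballI impI)
    show "restr \<A> a m \<in> car \<A>"
      using restr_closed[OF assms(1,2,7) m(1)] .
    show "h (restr \<A> a m) \<subseteq>\<^sub>m h (restr \<A> a s)" if "s \<in> S" for s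
      using that assms(4) m by (simp add: h_restr subsetD map_le_restrict_map_mono)
  next
    fix l assume l: "l \<in> car \<A>" and below: "\<forall>s\<in>S. h l \<subseteq>\<^sub>m h (restr \<A> a s)"
    then have below_restr: "\<forall>s\<in>S. h l \<subseteq>\<^sub>m h s |` dom (h a)"
      using assms(4) by (simp add: h_restr subsetD)
    obtain s\<^sub>0 where "s\<^sub>0 \<in> S" using assms(5) by blast
    with below_restr have "dom (h l) \<subseteq> dom (h a)"
      by (simp add: map_le_restrict_map_iff)
    moreover from below_restr have "h l \<subseteq>\<^sub>m h m"
      by (simp add: m_greatest[OF l] map_le_restrict_map_iff)
    ultimately show "h l \<subseteq>\<^sub>m h (restr \<A> a m)"
      by (simp add: h_restr m(1) map_le_restrict_map_iff)
  qed
qed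

end
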